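(* For any $R>0$ and any finite sequence of intervals $([x_i,y_i])_{i=1}^m$ (with $x_i\le y_i$), there exists a sequence of intervals $([s_i,t_i])_{i=1}^{m'}$ with $m'\le m$ such that: each $s_i$ belongs to $\{x_1,\dots,x_m\}$ and each $t_i$ belongs to $\{y_1,\dots,y_m\}$; $\sum_{i=1}^{m'}|t_i-s_i|\le 2mR+\sum_{i=1}^m|y_i-x_i|$; $\mathrm{d}([s_i,t_i],[s_j,t_j])\ge R$ for all $1\le i\ne j\le m'$; and $\bigcup_{i=1}^m[x_i,y_i]\subset\bigcup_{i=1}^{m'}[s_i,t_i]$.
   Context: For sets $A,B\subset\mathbb{R}$, $\mathrm{d}(A,B):=\inf\{|x-y|:x\in A,y\in B\}$ is the Euclidean distance between them. *)

theory Defs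
  imports "HOL-Analysis.Analysis"
begin

end

theory Submission
  imports Defs
begin

text \<open>Insert the intervals one at a time into a family of pairwise \<open>R\<close>-separated intervals.
  The new interval \<open>[a, b]\<close> is merged with all members of the family lying within distance
  less than \<open>R\<close> of it, into their convex hull. The hull reaches at most \<open>R\<close> beyond \<open>[a, b]\<close>
  plus the length of one absorbed interval on each side, so every insertion increases the total
  length by at most \<open>(b - a) + 2R\<close>; and any old interval far from \<open>[a, b]\<close> is also far from the
  absorbed ones (by separation), hence from the hull.\<close>

definition separated :: "real \<Rightarrow> real \<times> real \<Rightarrow> real \<times> real \<Rightarrow> bool" where
  "separated R p q \<longleftrightarrow> snd p + R \<le> fst q \<or> snd q + R \<le> fst p"

lemma separated_commute: "separated R p q \<longleftrightarrow> separated R q p"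
  unfolding separated_def by auto

lemma setdist_atLeastAtMost_ge_if_separated:
  fixes a b c d R :: real
  assumes "a \<le> b" "c \<le> d" "separated R (a, b) (c, d)"
  shows "R \<le> setdist {a..b} {c..d}"
  using assms by (intro le_setdistI) (auto simp: separated_def dist_real_def)

definition near_intervals :: "real \<Rightarrow> real \<Rightarrow> real \<Rightarrow> (real \<times> real) set \<Rightarrow> (real \<times> real) set" where
  "near_intervals R a b P = {p \<in> P. \<not> separated R p (a, b)}"

definition merged_interval :: "real \<Rightarrow> real \<Rightarrow> real \<Rightarrow> (real \<times> real) set \<Rightarrow> real \<times> real" where
  "merged_interval R a b P =
     (Min (insert a (fst ` near_intervals R a b P)), Max (insert b (snd ` near_intervals R a b P)))"

definition add_interval :: "real \<Rightarrow> real \<Rightarrow> real \<Rightarrow> (real \<times> real) set \<Rightarrow> (real \<times> real) set" where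
  "add_interval R a b P = insert (merged_interval R a b P) (P - near_intervals R a b P)"

lemma near_intervalsD:
  assumes "p \<in> near_intervals R a b P"
  shows "p \<in> P" "a < snd p + R" "fst p < b + R"
  using assms unfolding near_intervals_def separated_def by auto

lemma finite_near_intervals: "finite P \<Longrightarrow> finite (near_intervals R a b P)"
  unfolding near_intervals_def by simp

lemma merged_interval_encloses:
  "finite P \<Longrightarrow> fst (merged_interval R a b P) \<le> a \<and> b \<le> snd (merged_interval R a b P)"
  using finite_near_intervals unfolding merged_interval_def by auto

lemma merged_interval_encloses_near:
  "finite P \<Longrightarrow> p \<in> near_intervals R a b P \<Longrightarrow>
     fst (merged_interval R a b P) \<le> fst p \<and> snd p \<le> snd (merged_interval R a b P)"
  using finite_near_intervals unfolding merged_interval_def by auto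

lemma merged_interval_endpoints:
  assumes "finite P"
  shows "fst (merged_interval R a b P) \<in> insert a (fst ` near_intervals R a b P)"
    and "snd (merged_interval R a b P) \<in> insert b (snd ` near_intervals R a b P)"
  using Min_in[of "insert a (fst ` near_intervals R a b P)"]
    Max_in[of "insert b (snd ` near_intervals R a b P)"] finite_near_intervals[OF assms]
  unfolding merged_interval_def by auto

lemma separated_merged_interval:
  assumes "finite P" "R \<ge> 0"
    and valid: "\<forall>p\<in>P. fst p \<le> snd p"
    and sep: "\<forall>p\<in>P. \<forall>q\<in>P. p \<noteq> q \<longrightarrow> separated R p q"
    and q: "q \<in> P - near_intervals R a b P"
  shows "separated R q (merged_interval R a b P)"
proof -
  let ?N = "near_intervals R a b P"
  have far: "separated R q (a, b)" and "fst q \<le> snd q"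
    using q valid unfolding near_intervals_def by auto
  have sep_near: "separated R q p" if "p \<in> ?N" for p
    using sep q that near_intervalsD(1)[OF that] by auto
  show ?thesis
  proof (cases "snd q + R \<le> a")
    case True
    \<comment> \<open>an absorbed interval reaches within \<open>R\<close> of \<open>a\<close>, so it cannot lie left of \<open>q\<close>\<close>
    have "snd q + R \<le> fst p" if "p \<in> ?N" for p
      using sep_near[OF that] near_intervalsD(2)[OF that] True \<open>fst q \<le> snd q\<close> \<open>R \<ge> 0\<close>
      unfolding separated_def by auto
    with True have "snd q + R \<le> fst (merged_interval R a b P)"
      using merged_interval_endpoints(1)[OF \<open>finite P\<close>, of R a b] by auto
    then show ?thesis unfolding separated_def by auto
  next
    case False
    then have "b + R \<le> fst q" using far unfolding separated_def by auto
    have "snd p + R \<le> fst q" if "p \<in> ?N" for p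
      using sep_near[OF that] near_intervalsD(3)[OF that] \<open>b + R \<le> fst q\<close> \<open>fst q \<le> snd q\<close> \<open>R \<ge> 0\<close>
      unfolding separated_def by auto
    with \<open>b + R \<le> fst q\<close> have "snd (merged_interval R a b P) + R \<le> fst q"
      using merged_interval_endpoints(2)[OF \<open>finite P\<close>, of R a b] by auto
    then show ?thesis unfolding separated_def by auto
  qed
qed

lemma merged_interval_length_le:
  assumes "finite P" "R \<ge> 0" "a \<le> b"
    and valid: "\<forall>p\<in>P. fst p \<le> snd p"
  shows "snd (merged_interval R a b P) - fst (merged_interval R a b P)
           \<le> (b - a) + (\<Sum>p\<in>near_intervals R a b P. snd p - fst p) + 2 * R"
proof -
  let ?N = "near_intervals R a b P" and ?len = "\<lambda>p. snd p - fst p"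
  have fin: "finite ?N" using finite_near_intervals[OF \<open>finite P\<close>] .
  have nonneg: "\<And>p. p \<in> ?N \<Longrightarrow> 0 \<le> ?len p" using valid near_intervalsD(1) by force
  have one: "?len p \<le> sum ?len ?N" if "p \<in> ?N" for p
    using member_le_sum[OF that, of ?len] nonneg fin by auto
  have two: "?len p + ?len q \<le> sum ?len ?N" if "p \<in> ?N" "q \<in> ?N" "p \<noteq> q" for p q
  proof -
    have "sum ?len {p, q} \<le> sum ?len ?N"
      using that nonneg fin by (intro sum_mono2) auto
    with that show ?thesis by simp
  qed
  have "0 \<le> sum ?len ?N" using nonneg by (simp add: sum_nonneg)
  moreover have "fst (merged_interval R a b P) = a \<or> (\<exists>p\<in>?N. fst (merged_interval R a b P) = fst p)"
    and "snd (merged_interval R a b P) = b \<or> (\<exists>q\<in>?N. snd (merged_interval R a b P) = snd q)"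
    using merged_interval_endpoints[OF \<open>finite P\<close>, of R a b] by auto
  ultimately show ?thesis
  proof (elim disjE bexE)
    fix p q assume p: "p \<in> ?N" and q: "q \<in> ?N"
      and "fst (merged_interval R a b P) = fst p" "snd (merged_interval R a b P) = snd q"
    then show ?thesis
      using one[OF p] two[OF p q] near_intervalsD[OF p] near_intervalsD[OF q] assms
      by (cases "p = q") auto
  next
    fix p assume p: "p \<in> ?N"
      and "fst (merged_interval R a b P) = fst p" "snd (merged_interval R a b P) = b"
    then show ?thesis using one[OF p] near_intervalsD[OF p] assms by auto
  next
    fix q assume q: "q \<in> ?N"
      and "fst (merged_interval R a b P) = a" "snd (merged_interval R a b P) = snd q"
    then show ?thesis using one[OF q] near_intervalsD[OF q] assms by auto
  qed (use assms in auto)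
qed

lemma finite_add_interval: "finite P \<Longrightarrow> finite (add_interval R a b P)"
  unfolding add_interval_def by simp

lemma card_add_interval_le: "finite P \<Longrightarrow> card (add_interval R a b P) \<le> Suc (card P)"
  unfolding add_interval_def
  using card_mono[of P "P - near_intervals R a b P"] by (auto simp: card_insert_if)

lemma add_interval_endpoints:
  assumes "finite P" "a \<in> X" "b \<in> Y" "\<forall>p\<in>P. fst p \<in> X \<and> snd p \<in> Y"
  shows "\<forall>p\<in>add_interval R a b P. fst p \<in> X \<and> snd p \<in> Y"
  using merged_interval_endpoints[OF \<open>finite P\<close>, of R a b] assms near_intervalsD(1)
  unfolding add_interval_def by fastforce

lemma add_interval_valid:
  assumes "finite P" "a \<le> b" "\<forall>p\<in>P. fst p \<le> snd p"
  shows "\<forall>p\<in>add_interval R a b P. fst p \<le> snd p"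
  using merged_interval_encloses[OF \<open>finite P\<close>, of R a b] assms
  unfolding add_interval_def by auto

lemma add_interval_pairwise_separated:
  assumes "finite P" "R \<ge> 0"
    and "\<forall>p\<in>P. fst p \<le> snd p"
    and "\<forall>p\<in>P. \<forall>q\<in>P. p \<noteq> q \<longrightarrow> separated R p q"
  shows "\<forall>p\<in>add_interval R a b P. \<forall>q\<in>add_interval R a b P. p \<noteq> q \<longrightarrow> separated R p q"
  using separated_merged_interval[OF assms] assms(4) separated_commute
  unfolding add_interval_def by auto

lemma add_interval_length_sum_le:
  assumes "finite P" "R \<ge> 0" "a \<le> b"
    and valid: "\<forall>p\<in>P. fst p \<le> snd p"
  shows "(\<Sum>p\<in>add_interval R a b P. snd p - fst p) \<le> (\<Sum>p\<in>P. snd p - fst p) + (b - a) + 2 * R"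
proof -
  let ?N = "near_intervals R a b P" and ?m = "merged_interval R a b P"
  let ?len = "\<lambda>p. snd p - fst p"
  have "0 \<le> ?len ?m"
    using merged_interval_encloses[OF \<open>finite P\<close>, of R a b] \<open>a \<le> b\<close> by simp
  then have "sum ?len (add_interval R a b P) \<le> ?len ?m + sum ?len (P - ?N)"
    using \<open>finite P\<close> unfolding add_interval_def by (simp add: sum.insert_if)
  also have "sum ?len (P - ?N) = sum ?len P - sum ?len ?N"
    using \<open>finite P\<close> by (intro sum_diff) (auto simp: near_intervals_def)
  finally show ?thesis
    using merged_interval_length_le[OF assms] by simp
qed

lemma add_interval_covers:
  assumes "finite P"
  shows "{a..b} \<union> (\<Union>p\<in>P. {fst p..snd p}) \<subseteq> (\<Union>p\<in>add_interval R a b P. {fst p..snd p})"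
proof -
  let ?m = "merged_interval R a b P"
  have "{fst p..snd p} \<subseteq> {fst ?m..snd ?m}" if "p \<in> near_intervals R a b P" for p
    using merged_interval_encloses_near[OF assms that] by auto
  moreover have "{a..b} \<subseteq> {fst ?m..snd ?m}"
    using merged_interval_encloses[OF assms, of R a b] by auto
  ultimately show ?thesis
    unfolding add_interval_def by blast
qed

fun merge_intervals :: "real \<Rightarrow> (nat \<Rightarrow> real) \<Rightarrow> (nat \<Rightarrow> real) \<Rightarrow> nat \<Rightarrow> (real \<times> real) set" where
  "merge_intervals R x y 0 = {}"
| "merge_intervals R x y (Suc m) = add_interval R (x m) (y m) (merge_intervals R x y m)"

lemma finite_merge_intervals: "finite (merge_intervals R x y m)"
  by (induction m) (simp_all add: finite_add_interval)

lemma card_merge_intervals_le: "card (merge_intervals R x y m) \<le> m"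
  by (induction m) (auto intro: le_trans[OF card_add_interval_le] finite_merge_intervals)

lemma merge_intervals_endpoints:
  "\<forall>p\<in>merge_intervals R x y m. fst p \<in> x ` {..<m} \<and> snd p \<in> y ` {..<m}"
proof (induction m)
  case (Suc m)
  have "x m \<in> x ` {..<Suc m}" "y m \<in> y ` {..<Suc m}" by auto
  moreover have "\<forall>p\<in>merge_intervals R x y m. fst p \<in> x ` {..<Suc m} \<and> snd p \<in> y ` {..<Suc m}"
    using Suc by auto
  ultimately show ?case
    unfolding merge_intervals.simps by (rule add_interval_endpoints[OF finite_merge_intervals])
qed simp

lemma merge_intervals_valid:
  "\<forall>i<m. x i \<le> y i \<Longrightarrow> \<forall>p\<in>merge_intervals R x y m. fst p \<le> snd p"
proof (induction m)
  case (Suc m)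
  then show ?case
    using add_interval_valid[OF finite_merge_intervals, of "x m" "y m" R x y m] by simp
qed simp

lemma merge_intervals_pairwise_separated:
  assumes "R \<ge> 0" "\<forall>i<m. x i \<le> y i"
  shows "\<forall>p\<in>merge_intervals R x y m. \<forall>q\<in>merge_intervals R x y m. p \<noteq> q \<longrightarrow> separated R p q"
  using assms(2)
proof (induction m)
  case (Suc m)
  then have "\<forall>i<m. x i \<le> y i" by simp
  with Suc.IH show ?case
    using add_interval_pairwise_separated[OF finite_merge_intervals assms(1) merge_intervals_valid]
    by simp
qed simp

lemma merge_intervals_length_sum_le:
  assumes "R \<ge> 0" "\<forall>i<m. x i \<le> y i"
  shows "(\<Sum>p\<in>merge_intervals R x y m. snd p - fst p) \<le> 2 * real m * R + (\<Sum>i<m. y i - x i)"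
  using assms(2)
proof (induction m)
  case (Suc m)
  then have valid: "\<forall>i<m. x i \<le> y i" and "x m \<le> y m" by simp_all
  with Suc.IH[OF valid] show ?case
    using add_interval_length_sum_le[OF finite_merge_intervals[of R x y m] assms(1) \<open>x m \<le> y m\<close>
        merge_intervals_valid[OF valid]]
    by (simp add: algebra_simps)
qed simp

lemma merge_intervals_covers:
  "(\<Union>i<m. {x i..y i}) \<subseteq> (\<Union>p\<in>merge_intervals R x y m. {fst p..snd p})"
proof (induction m)
  case (Suc m)
  then show ?case
    unfolding lessThan_Suc UN_insert merge_intervals.simps
    using add_interval_covers[OF finite_merge_intervals[of R x y m], of "x m" "y m" R] by blast
qed simp

theorem lemma5p6:
  fixes R :: real and m :: nat and x y :: "nat \<Rightarrow> real"
  assumes "R > 0" and "\<forall>i<m. x i \<le> y i"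
  shows "\<exists>m' s t. m' \<le> m \<and>
           (\<forall>i<m'. s i \<in> x ` {..<m} \<and> t i \<in> y ` {..<m} \<and> s i \<le> t i) \<and>
           (\<Sum>i<m'. \<bar>t i - s i\<bar>) \<le> 2 * real m * R + (\<Sum>i<m. \<bar>y i - x i\<bar>) \<and>
           (\<forall>i<m'. \<forall>j<m'. i \<noteq> j \<longrightarrow> setdist {s i..t i} {s j..t j} \<ge> R) \<and>
           (\<Union>i<m. {x i..y i}) \<subseteq> (\<Union>i<m'. {s i..t i})"
proof -
  let ?P = "merge_intervals R x y m"
  obtain h where h: "bij_betw h {..<card ?P} ?P"
    using ex_bij_betw_nat_finite[OF finite_merge_intervals] atLeast0LessThan by metis
  then have h_in: "\<And>i. i < card ?P \<Longrightarrow> h i \<in> ?P"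
    and h_inj: "\<And>i j. i < card ?P \<Longrightarrow> j < card ?P \<Longrightarrow> i \<noteq> j \<Longrightarrow> h i \<noteq> h j"
    by (auto simp: bij_betw_def inj_on_def)
  have valid: "\<forall>p\<in>?P. fst p \<le> snd p" using merge_intervals_valid[OF assms(2)] .
  show ?thesis
  proof (intro exI conjI allI impI)
    show "card ?P \<le> m" by (rule card_merge_intervals_le)
    show "fst (h i) \<in> x ` {..<m}" "snd (h i) \<in> y ` {..<m}" "fst (h i) \<le> snd (h i)"
      if "i < card ?P" for i
      using merge_intervals_endpoints[of R x y m] valid h_in[OF that] by auto
    have "(\<Sum>i<card ?P. \<bar>snd (h i) - fst (h i)\<bar>) = (\<Sum>p\<in>?P. snd p - fst p)"
      using sum.reindex_bij_betw[OF h, of "\<lambda>p. snd p - fst p"] h_in valid by simp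
    also have "\<dots> \<le> 2 * real m * R + (\<Sum>i<m. \<bar>y i - x i\<bar>)"
      using merge_intervals_length_sum_le[of R m x y] assms by simp
    finally show "(\<Sum>i<card ?P. \<bar>snd (h i) - fst (h i)\<bar>) \<le> 2 * real m * R + (\<Sum>i<m. \<bar>y i - x i\<bar>)" .
    show "R \<le> setdist {fst (h i)..snd (h i)} {fst (h j)..snd (h j)}"
      if "i < card ?P" "j < card ?P" "i \<noteq> j" for i j
      using merge_intervals_pairwise_separated[of R m x y] assms h_in that h_inj[OF that] valid
      by (intro setdist_atLeastAtMost_ge_if_separated) auto
    have "(\<Union>i<card ?P. {fst (h i)..snd (h i)}) = (\<Union>p\<in>?P. {fst p..snd p})"
      using image_comp[of "\<lambda>p. {fst p..snd p}" h "{..<card ?P}"] bij_betw_imp_surj_on[OF h]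
      by (simp add: comp_def)
    then show "(\<Union>i<m. {x i..y i}) \<subseteq> (\<Union>i<card ?P. {fst (h i)..snd (h i)})"
      using merge_intervals_covers[of x y m R] by simp
  qed
qed

end
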